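(* Let $B$ be a skew-symmetrizable matrix and let $A$ and $A'$ be two admissible quasi-Cartan companions of $B$. Then $A'$ can be obtained from $A$ by a sequence of sign changes at vertices (i.e. simultaneous multiplication of the $k$-th row and $k$-th column by $-1$). In particular, $A$ and $A'$ are equivalent.
   Context: An $n\times n$ integer matrix $B$ is skew-symmetrizable if $DB$ is skew-symmetric for some diagonal matrix $D$ with positive diagonal entries. Its diagram $\Gamma(B)$ is the directed graph on vertices $1,\dots,n$ with an edge $i\to j$ iff $B_{ij}>0$, this edge carrying weight $|B_{ij}B_{ji}|$. A cycle in a diagram is an induced subgraph on $r\ge 3$ vertices whose vertices can be labeled $1,\dots,r$ so that $i,j$ are adjacent iff $|i-j|=1$ or $\{i,j\}=\{1,r\}$; it is oriented if its edges form a directed cycle, non-oriented otherwise. A quasi-Cartan matrix is an integer matrix $A$ with all diagonal entries $2$ such that $DA$ is symmetric for some diagonal $D$ with positive diagonal entries (a symmetrizer). A quasi-Cartan companion of $B$ is a quasi-Cartan matrix $A$ with $|A_{ij}|=|B_{ij}|$ for all $i\ne j$. It is admissible if for every cycle $Z$ in $\Gamma(B)$ the product $\prod_{\{i,j\}\in Z}(-A_{ij})$ over the edges of $Z$ is negative when $Z$ is oriented and positive when $Z$ is non-oriented. The sign change at $k$ replaces $A$ by the matrix obtained by multiplying its $k$-th row and $k$-th column by $-1$. Two quasi-Cartan matrices $A,A'$ are equivalent if they have a common symmetrizer $D$ and $DA'=E^T(DA)E$ for some integer matrix $E$ with $\det E=\pm1$. *)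

theory Defs
  imports "HOL-Analysis.Analysis"
begin

definition skew_symmetrizable :: "int^'n^'n \<Rightarrow> bool" where
  "skew_symmetrizable B \<longleftrightarrow>
     (\<exists>d::real^'n. (\<forall>i. d$i > 0) \<and>
        (\<forall>i j. d$i * of_int (B$i$j) = - (d$j * of_int (B$j$i))))"

definition is_symmetrizer :: "real^'n \<Rightarrow> int^'n^'n \<Rightarrow> bool" where
  "is_symmetrizer d A \<longleftrightarrow> (\<forall>i. d$i > 0) \<and>
     (\<forall>i j. d$i * of_int (A$i$j) = d$j * of_int (A$j$i))"

definition quasi_Cartan :: "int^'n^'n \<Rightarrow> bool" where
  "quasi_Cartan A \<longleftrightarrow> (\<forall>i. A$i$i = 2) \<and> (\<exists>d. is_symmetrizer d A)"

definition quasi_Cartan_companion :: "int^'n^'n \<Rightarrow> int^'n^'n \<Rightarrow> bool" where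
  "quasi_Cartan_companion B A \<longleftrightarrow> quasi_Cartan A \<and>
     (\<forall>i j. i \<noteq> j \<longrightarrow> \<bar>A$i$j\<bar> = \<bar>B$i$j\<bar>)"

definition adjacent :: "int^'n^'n \<Rightarrow> 'n \<Rightarrow> 'n \<Rightarrow> bool" where
  "adjacent B i j \<longleftrightarrow> B$i$j > 0 \<or> B$j$i > 0"

text \<open>A labeling f(0),...,f(r-1) of an induced cycle on r \<ge> 3 vertices
  (labels shifted from 1..r to 0..r-1).\<close>
definition cycle_labeling :: "int^'n^'n \<Rightarrow> nat \<Rightarrow> (nat \<Rightarrow> 'n) \<Rightarrow> bool" where
  "cycle_labeling B r f \<longleftrightarrow> 3 \<le> r \<and> inj_on f {0..<r} \<and>
     (\<forall>i<r. \<forall>j<r. adjacent B (f i) (f j) \<longleftrightarrow>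
        (i = Suc j \<or> j = Suc i \<or> {i, j} = {0, r - 1}))"

definition is_cycle :: "int^'n^'n \<Rightarrow> 'n set \<Rightarrow> bool" where
  "is_cycle B S \<longleftrightarrow> (\<exists>r f. cycle_labeling B r f \<and> f ` {0..<r} = S)"

definition oriented_cycle :: "int^'n^'n \<Rightarrow> 'n set \<Rightarrow> bool" where
  "oriented_cycle B S \<longleftrightarrow> (\<exists>r f. cycle_labeling B r f \<and> f ` {0..<r} = S \<and>
     (\<forall>k<r. B $ f k $ f ((k + 1) mod r) > 0))"

text \<open>Product of (-A_ij) over the edges of the cycle, i.e. over consecutive
  labels (each edge of the induced cycle occurs exactly once).\<close>
definition cycle_edge_prod :: "int^'n^'n \<Rightarrow> nat \<Rightarrow> (nat \<Rightarrow> 'n) \<Rightarrow> int" where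
  "cycle_edge_prod A r f = (\<Prod>k<r. - (A $ f k $ f ((k + 1) mod r)))"

definition admissible_companion :: "int^'n^'n \<Rightarrow> int^'n^'n \<Rightarrow> bool" where
  "admissible_companion B A \<longleftrightarrow> quasi_Cartan_companion B A \<and>
     (\<forall>r f. cycle_labeling B r f \<longrightarrow>
        (oriented_cycle B (f ` {0..<r}) \<longrightarrow> cycle_edge_prod A r f < 0) \<and>
        (\<not> oriented_cycle B (f ` {0..<r}) \<longrightarrow> cycle_edge_prod A r f > 0))"

definition sign_change :: "'n \<Rightarrow> int^'n^'n \<Rightarrow> int^'n^'n" where
  "sign_change k A = (\<chi> i j. (if i = k then -1 else 1) * (if j = k then -1 else 1) * A$i$j)"

definition sign_changes :: "'n list \<Rightarrow> int^'n^'n \<Rightarrow> int^'n^'n" where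
  "sign_changes ks A = fold sign_change ks A"

definition sym_form :: "real^'n \<Rightarrow> int^'n^'n \<Rightarrow> real^'n^'n" where
  "sym_form d A = (\<chi> i j. d$i * of_int (A$i$j))"

definition qc_equivalent :: "int^'n^'n \<Rightarrow> int^'n^'n \<Rightarrow> bool" where
  "qc_equivalent A A' \<longleftrightarrow> (\<exists>d. is_symmetrizer d A \<and> is_symmetrizer d A' \<and>
     (\<exists>E::int^'n^'n. (det E = 1 \<or> det E = -1) \<and>
        sym_form d A' = transpose (\<chi> i j. real_of_int (E$i$j)) ** sym_form d A ** (\<chi> i j. real_of_int (E$i$j))))"

end

theory Submission
  imports Defs
begin

(*
  Given two companions A and A', the entries agree up to sign, A'_ij = e_ij A_ij with
  e_ij = e_ji = +-1 (symmetry of e comes from the symmetrizers).  The proof is a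
  statement about such an edge signing e of the diagram of B:

  1. Graph part (generic in the vertex type).  If the product of e along every induced
     (chordless) cycle is 1, then so is its product along every closed walk: closed
     walks are split at repeated vertices and at chords into shorter closed walks.  A
     signing that is trivial on all closed walks is a "switching": e_ij = s_i s_j for
     some s with values +-1 (take s_v to be the product along a walk from a fixed root
     of the connected component of v to v).
  2. Matrix part.  Admissibility of A and A' prescribes the same sign to both
     cycle products along every induced cycle, so e is trivial on induced cycles.
     Hence A'_ij = s_i s_j A_ij, which is the effect of sign changes at the vertices
     with s_v = -1, and also conjugation by the unimodular diagonal matrix diag(s).
*)

fun walk_prod :: "('a \<Rightarrow> 'a \<Rightarrow> int) \<Rightarrow> 'a list \<Rightarrow> int" where
  "walk_prod e (x # y # zs) = e x y * walk_prod e (y # zs)"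
| "walk_prod e _ = 1"

lemma walk_prod_append:
  "walk_prod e (xs @ y # ys) = walk_prod e (xs @ [y]) * walk_prod e (y # ys)"
  by (induction xs rule: induct_list012) auto

lemma walk_prod_append_nonempty:
  "xs \<noteq> [] \<Longrightarrow> ys \<noteq> [] \<Longrightarrow>
     walk_prod e (xs @ ys) = walk_prod e xs * e (last xs) (hd ys) * walk_prod e ys"
  by (induction xs rule: induct_list012) (auto simp: neq_Nil_conv)

lemma walk_prod_rev:
  assumes "\<And>x y. e x y = e y x"
  shows "walk_prod e (rev xs) = walk_prod e xs"
proof (induction xs rule: induct_list012)
  case (3 x y zs)
  have "walk_prod e (rev (x # y # zs)) = walk_prod e (rev (y # zs)) * e y x"
    by (subst rev.simps, subst walk_prod_append_nonempty) (auto simp: last_rev)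
  then show ?case using 3 assms by simp
qed auto

lemma walk_prod_abs: "(\<And>x y. \<bar>e x y\<bar> = 1) \<Longrightarrow> \<bar>walk_prod e xs\<bar> = 1"
  by (induction xs rule: induct_list012) (auto simp: abs_mult)

lemma walk_prod_nth: "walk_prod e xs = (\<Prod>k < length xs - 1. e (xs!k) (xs!Suc k))"
  by (induction xs rule: induct_list012)
    (auto simp del: prod.lessThan_Suc simp add: prod.lessThan_Suc_shift)

lemma unit_square: "\<bar>x :: int\<bar> = 1 \<Longrightarrow> x * x = 1"
  by (metis abs_mult_self_eq mult.right_neutral)

lemma walk_prod_split_at_repeat:
  "walk_prod e (ys @ u # zs @ u # ws) = walk_prod e (u # zs @ [u]) * walk_prod e (ys @ u # ws)"
  using walk_prod_append[of e ys u "zs @ u # ws"] walk_prod_append[of e "u # zs" u ws]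
    walk_prod_append[of e ys u ws]
  by simp

(* A closed walk with a chord a-b is the product of two shorter closed walks through the
   chord, since traversing the chord in both directions contributes e a b * e b a = 1. *)
lemma walk_prod_split_at_chord:
  assumes "e a b * e b a = 1"
  shows "walk_prod e (ys @ a # zs @ b # ws) =
           walk_prod e (a # zs @ [b, a]) * walk_prod e (ys @ a # b # ws)"
proof -
  have "walk_prod e (ys @ a # zs @ b # ws) =
          walk_prod e (ys @ [a]) * walk_prod e (a # zs @ [b]) * walk_prod e (b # ws)"
    by (metis walk_prod_append append_Cons append.assoc mult.assoc)
  moreover have "walk_prod e (a # zs @ [b, a]) = walk_prod e (a # zs @ [b]) * e b a"
    using walk_prod_append[of e "a # zs" b "[a]"] by simp
  moreover have "walk_prod e (ys @ a # b # ws) = walk_prod e (ys @ [a]) * e a b * walk_prod e (b # ws)"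
    using walk_prod_append[of e ys a "b # ws"] by simp
  ultimately show ?thesis using assms by (simp add: algebra_simps)
qed

lemma successively_split:
  "successively P (xs @ y # ys) \<longleftrightarrow> successively P (xs @ [y]) \<and> successively P (y # ys)"
  by (induction xs rule: induct_list012) auto

(* A closed walk x_0 ... x_r = x_0 has no chord: two of its entries are adjacent only
   if they are consecutive or form the closing pair (x_0, x_(r-1)). *)
definition chordless :: "('a \<Rightarrow> 'a \<Rightarrow> bool) \<Rightarrow> 'a list \<Rightarrow> bool" where
  "chordless adj xs \<longleftrightarrow> \<not> (\<exists>ys a zs b ws. xs = ys @ a # zs @ b # ws \<and> zs \<noteq> [] \<and>
      2 \<le> length ys + length ws \<and> adj a b)"

definition induced_cycle_walk :: "('a \<Rightarrow> 'a \<Rightarrow> bool) \<Rightarrow> 'a list \<Rightarrow> bool" where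
  "induced_cycle_walk adj xs \<longleftrightarrow> successively adj xs \<and> hd xs = last xs \<and> 4 \<le> length xs \<and>
     distinct (butlast xs) \<and> chordless adj xs"

(* Induced cycles control all closed walks: a closed walk of length at most 3 is trivial,
   and a longer one either repeats a vertex, is an induced cycle, or has a chord. *)
lemma closed_walk_prod_one:
  assumes adj_sym: "\<And>x y. adj x y = adj y x" and adj_irrefl: "\<And>x. \<not> adj x x"
    and e_sym: "\<And>x y. e x y = e y x" and e_unit: "\<And>x y. \<bar>e x y\<bar> = 1"
    and induced: "\<And>xs. induced_cycle_walk adj xs \<Longrightarrow> walk_prod e xs = 1"
  shows "successively adj xs \<Longrightarrow> xs \<noteq> [] \<Longrightarrow> hd xs = last xs \<Longrightarrow> walk_prod e xs = 1"
proof (induction "length xs" arbitrary: xs rule: less_induct)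
  case less
  have e_inv: "e a b * e b a = 1" for a b
    using unit_square[OF e_unit[of a b]] e_sym[of a b] by simp
  consider "length xs \<le> 3" | "\<not> distinct (butlast xs)" | "induced_cycle_walk adj xs"
    | "4 \<le> length xs" "\<not> chordless adj xs"
    using less.prems unfolding induced_cycle_walk_def by linarith
  then show ?case
  proof cases
    case 1
    then consider a where "xs = [a]" | a b where "xs = [a, b]" | a b c where "xs = [a, b, c]"
      using less.prems(2)
      by (cases xs; cases "tl xs"; cases "tl (tl xs)"; cases "tl (tl (tl xs))"; auto)
    then show ?thesis
    proof cases
      case (2 a b)
      then show ?thesis using less.prems(1,3) adj_irrefl by simp
    qed (use less.prems(3) e_inv in simp_all)
  next
    case 2
    then obtain ys u zs ws where bl: "butlast xs = ys @ [u] @ zs @ [u] @ ws"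
      using not_distinct_decomp by blast
    define ws' where "ws' = ws @ [last xs]"
    have ws'_ne: "ws' \<noteq> []" and last_ws': "last ws' = last xs"
      by (simp_all add: ws'_def)
    have xs: "xs = ys @ u # zs @ u # ws'"
      using append_butlast_last_id[OF less.prems(2)] unfolding bl ws'_def by simp
    have len: "length xs = length ys + length zs + length ws' + 2"
      using arg_cong[OF xs, of length] by simp
    have hd_xs: "hd xs = hd (ys @ [u])"
      using arg_cong[OF xs, of hd] by (simp add: hd_append)
    have walks: "successively adj (u # zs @ [u])" "successively adj (ys @ u # ws')"
      using less.prems(1) successively_split[of adj ys u "zs @ u # ws'"]
        successively_split[of adj "u # zs" u ws'] successively_split[of adj ys u ws']
      unfolding xs by simp_all
    have "walk_prod e (u # zs @ [u]) = 1"
      by (rule less.hyps) (use walks len ws'_ne in auto)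
    moreover have "walk_prod e (ys @ u # ws') = 1"
      by (rule less.hyps)
        (use walks len ws'_ne last_ws' hd_xs less.prems(3) in \<open>auto simp: hd_append\<close>)
    ultimately show ?thesis unfolding xs walk_prod_split_at_repeat by simp
  next
    case 3
    then show ?thesis by (rule induced)
  next
    case 4
    then obtain ys a zs b ws where xs: "xs = ys @ a # zs @ b # ws" and "zs \<noteq> []"
      and short: "2 \<le> length ys + length ws" and ab: "adj a b"
      unfolding chordless_def by blast
    have walks: "successively adj (a # zs @ [b, a])" "successively adj (ys @ a # b # ws)"
      using less.prems(1) ab adj_sym successively_split[of adj ys a "zs @ b # ws"]
        successively_split[of adj "a # zs" b ws] successively_split[of adj "a # zs" b "[a]"]
        successively_split[of adj ys a "b # ws"]
      unfolding xs by simp_all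
    have "walk_prod e (a # zs @ [b, a]) = 1"
      by (rule less.hyps) (use walks xs short in auto)
    moreover have "walk_prod e (ys @ a # b # ws) = 1"
      by (rule less.hyps) (use walks xs \<open>zs \<noteq> []\<close> less.prems(3) in \<open>auto simp: hd_append\<close>)
    ultimately show ?thesis unfolding xs walk_prod_split_at_chord[of e a b, OF e_inv] by simp
  qed
qed

lemma rtranclp_walk:
  "adj\<^sup>*\<^sup>* u v \<Longrightarrow> \<exists>xs. xs \<noteq> [] \<and> hd xs = u \<and> last xs = v \<and> successively adj xs"
proof (induction rule: rtranclp_induct)
  case base
  show ?case by (intro exI[of _ "[u]"]) auto
next
  case (step y z)
  then obtain xs where "xs \<noteq> [] \<and> hd xs = u \<and> last xs = y \<and> successively adj xs" by blast
  then show ?case using step by (intro exI[of _ "xs @ [z]"]) (auto simp: successively_append_iff)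
qed

lemma switching_of_balanced_signing:
  assumes adj_sym: "\<And>x y. adj x y = adj y x"
    and e_sym: "\<And>x y. e x y = e y x" and e_unit: "\<And>x y. \<bar>e x y\<bar> = 1"
    and balanced: "\<And>xs. successively adj xs \<Longrightarrow> xs \<noteq> [] \<Longrightarrow> hd xs = last xs \<Longrightarrow>
                          walk_prod e xs = 1"
  obtains s where "\<And>v. \<bar>s v\<bar> = 1" and "\<And>i j. adj i j \<Longrightarrow> e i j = s i * s j"
proof -
  define R where "R = adj\<^sup>*\<^sup>*"
  have "equivp R"
    unfolding R_def by (rule equivp_rtranclp) (use adj_sym in \<open>auto intro: sympI\<close>)
  hence R_eq: "R i j \<longleftrightarrow> R i = R j" for i j by (simp add: equivp_def)
  define root where "root v = (SOME u. R v u)" for v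
  have "R v (root v)" for v
    unfolding root_def by (rule someI[of _ v]) (simp add: R_def)
  hence "adj\<^sup>*\<^sup>* (root v) v" for v
    using \<open>equivp R\<close> unfolding R_def by (meson equivp_symp)
  hence "\<exists>xs. xs \<noteq> [] \<and> hd xs = root v \<and> last xs = v \<and> successively adj xs" for v
    by (rule rtranclp_walk)
  then obtain P where P: "\<And>v. P v \<noteq> [] \<and> hd (P v) = root v \<and> last (P v) = v \<and> successively adj (P v)"
    by (metis someI_ex)
  define s where "s v = walk_prod e (P v)" for v
  have s_unit: "\<bar>s v\<bar> = 1" for v unfolding s_def using walk_prod_abs e_unit by blast
  have "e i j = s i * s j" if ij: "adj i j" for i j
  proof -
    have "R i = R j" using R_eq ij unfolding R_def by (metis r_into_rtranclp)
    hence same_root: "root i = root j" unfolding root_def by simp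
    let ?W = "P i @ rev (P j)"
    have "successively adj (rev (P j))"
      using P[of j] adj_sym by (simp add: successively_mono)
    hence "successively adj ?W"
      using P[of i] P[of j] ij by (simp add: successively_append_iff hd_rev)
    moreover have "hd ?W = last ?W" using P[of i] P[of j] same_root by (simp add: last_rev)
    ultimately have "walk_prod e ?W = 1" using balanced P[of i] by simp
    moreover have "walk_prod e ?W = s i * e i j * s j"
      using P[of i] P[of j] walk_prod_rev[of e "P j", OF e_sym] unfolding s_def
      by (simp add: walk_prod_append_nonempty hd_rev)
    ultimately have cycle: "s i * e i j * s j = 1" by simp
    have "e i j = e i j * (s i * s i) * (s j * s j)" using unit_square s_unit by simp
    also have "\<dots> = s i * s j * (s i * e i j * s j)" by (simp only: mult_ac)
    finally show ?thesis using cycle by simp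
  qed
  with s_unit show thesis by (rule that)
qed


lemma cycle_labeling_of_induced_cycle_walk:
  assumes irrefl: "\<And>x. \<not> adjacent B x x" and cyc: "induced_cycle_walk (adjacent B) xs"
  shows "cycle_labeling B (length xs - 1) (nth xs)"
proof -
  define r where "r = length xs - 1"
  have walk: "successively (adjacent B) xs" and closed: "hd xs = last xs" and len: "4 \<le> length xs"
    and dist: "distinct (butlast xs)" and cf: "chordless (adjacent B) xs"
    using cyc unfolding induced_cycle_walk_def by auto
  have adj_sym: "adjacent B x y = adjacent B y x" for x y by (auto simp: adjacent_def)
  have "xs \<noteq> []" using len by auto
  hence wrap: "xs ! r = xs ! 0" using closed by (simp add: r_def hd_conv_nth last_conv_nth)
  have inj: "inj_on (nth xs) {0..<r}"
  proof -
    have "inj_on (nth (butlast xs)) {0..<r}" using dist by (intro inj_on_nth) (auto simp: r_def)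
    then show ?thesis by (rule inj_on_cong[THEN iffD1, rotated]) (auto simp: r_def nth_butlast)
  qed
  have step: "adjacent B (xs!k) (xs!Suc k)" if "k < r" for k
    using successively_nth[OF walk] that r_def by auto
  have no_chord: "j = Suc i \<or> (i = 0 \<and> j = r - 1)"
    if ij: "i < j" "j < r" and adj: "adjacent B (xs!i) (xs!j)" for i j
  proof (rule ccontr)
    assume far: "\<not> (j = Suc i \<or> (i = 0 \<and> j = r - 1))"
    define ys zs ws where "ys = take i xs" and "zs = drop (Suc i) (take j xs)"
      and "ws = drop (Suc j) xs"
    have j_len: "j < length xs" using ij r_def by simp
    have "take j xs = ys @ xs!i # zs"
      using id_take_nth_drop[of i "take j xs"] ij j_len unfolding ys_def zs_def by (simp add: min_def)
    hence "xs = ys @ xs!i # zs @ xs!j # ws"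
      using id_take_nth_drop[OF j_len] unfolding ws_def by simp
    moreover have "zs \<noteq> []" and "2 \<le> length ys + length ws"
      using far ij j_len unfolding ys_def zs_def ws_def r_def by auto
    ultimately show False using cf adj unfolding chordless_def by blast
  qed
  have "adjacent B (xs!i) (xs!j) \<longleftrightarrow> (i = Suc j \<or> j = Suc i \<or> {i, j} = {0, r - 1})"
    if ij: "i < r" "j < r" for i j
  proof
    assume adj: "adjacent B (xs!i) (xs!j)"
    consider "i < j" | "i = j" | "j < i" by arith
    then show "i = Suc j \<or> j = Suc i \<or> {i, j} = {0, r - 1}"
    proof cases
      case 1 then show ?thesis using no_chord[OF 1 ij(2) adj] by auto
    next
      case 2 then show ?thesis using adj irrefl by auto
    next
      case 3 then show ?thesis using no_chord[OF 3 ij(1)] adj adj_sym by auto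
    qed
  next
    assume "i = Suc j \<or> j = Suc i \<or> {i, j} = {0, r - 1}"
    moreover have "adjacent B (xs!(r - 1)) (xs!0)"
    proof -
      have "Suc (r - 1) = r" using len r_def by simp
      then show ?thesis using step[of "r - 1"] wrap by simp
    qed
    ultimately show "adjacent B (xs!i) (xs!j)"
      using step[of i] step[of j] ij adj_sym by (auto simp: doubleton_eq_iff)
  qed
  then show ?thesis unfolding cycle_labeling_def r_def[symmetric] using inj len r_def by auto
qed


lemma cycle_edge_prod_rescaled:
  assumes closed: "hd xs = last xs" "xs \<noteq> []" and r: "r = length xs - 1"
    and rescaled: "\<And>i j. A' $ i $ j = e i j * A $ i $ j"
  shows "cycle_edge_prod A' r (nth xs) = walk_prod e xs * cycle_edge_prod A r (nth xs)"
proof -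
  have next_pos: "xs ! (Suc k mod r) = xs ! Suc k" if "k < r" for k
  proof (cases "Suc k < r")
    case False
    hence "Suc k = r" using that by simp
    moreover have "xs ! 0 = xs ! r" using closed r by (simp add: hd_conv_nth last_conv_nth)
    ultimately show ?thesis by simp
  qed simp
  have "cycle_edge_prod A' r (nth xs) = (\<Prod>k<r. e (xs!k) (xs!Suc k) * - (A $ (xs!k) $ (xs!Suc k)))"
    unfolding cycle_edge_prod_def by (rule prod.cong) (auto simp: next_pos rescaled)
  also have "\<dots> = walk_prod e xs * cycle_edge_prod A r (nth xs)"
    unfolding cycle_edge_prod_def walk_prod_nth prod.distrib r[symmetric] by (simp add: next_pos)
  finally show ?thesis .
qed

lemma sgn_real_of_int: "sgn (real_of_int x) = real_of_int (sgn x)"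
  by (simp add: sgn_if)

(* B has zero diagonal and sign-skew-symmetric entries, so adjacency in the diagram
   means a nonzero entry. *)
lemma skew_symmetrizable_diagram:
  fixes B :: "int^'n^'n"
  assumes "skew_symmetrizable B"
  shows "B $ i $ i = 0" and "adjacent B i j \<longleftrightarrow> B $ i $ j \<noteq> 0"
proof -
  obtain d :: "real^'n" where pos: "\<And>i. d$i > 0"
    and skew: "\<And>i j. d$i * of_int (B$i$j) = - (d$j * of_int (B$j$i))"
    using assms unfolding skew_symmetrizable_def by blast
  show "B $ i $ i = 0" using skew[of i i] pos[of i] by simp
  have "sgn (B$i$j) = - sgn (B$j$i)"
    using arg_cong[OF skew[of i j], of sgn] pos[of i] pos[of j]
    by (simp add: sgn_mult sgn_real_of_int flip: of_int_minus)
  then show "adjacent B i j \<longleftrightarrow> B $ i $ j \<noteq> 0"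
    unfolding adjacent_def by (auto simp: sgn_if split: if_splits)
qed

lemma symmetrizer_sgn:
  assumes "is_symmetrizer d A"
  shows "sgn (A $ i $ j) = sgn (A $ j $ i)"
proof -
  have pos: "d$i > 0" "d$j > 0" and sym: "d$i * of_int (A$i$j) = d$j * of_int (A$j$i)"
    using assms unfolding is_symmetrizer_def by auto
  show ?thesis using arg_cong[OF sym, of sgn] pos by (simp add: sgn_mult sgn_real_of_int)
qed


definition sign_ratio :: "int^'n^'n \<Rightarrow> int^'n^'n \<Rightarrow> 'n \<Rightarrow> 'n \<Rightarrow> int" where
  "sign_ratio A A' i j = (if A' $ i $ j = A $ i $ j then 1 else -1)"

lemma eq_iff_sgn_eq_if_abs_eq: "\<bar>x\<bar> = \<bar>y\<bar> \<Longrightarrow> x = y \<longleftrightarrow> sgn x = sgn (y :: int)"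
  by (auto simp: sgn_if abs_if split: if_splits)

lemma companion_sign_ratio:
  assumes "quasi_Cartan_companion B A" and "quasi_Cartan_companion B A'"
  shows "A' $ i $ j = sign_ratio A A' i j * A $ i $ j"
    and "sign_ratio A A' i j = sign_ratio A A' j i"
    and "\<bar>sign_ratio A A' i j\<bar> = 1"
proof -
  obtain d d' where sym: "is_symmetrizer d A" "is_symmetrizer d' A'"
    and diag: "\<And>i. A $ i $ i = 2" "\<And>i. A' $ i $ i = 2"
    and offdiag: "\<And>i j. i \<noteq> j \<Longrightarrow> \<bar>A $ i $ j\<bar> = \<bar>B $ i $ j\<bar>"
                 "\<And>i j. i \<noteq> j \<Longrightarrow> \<bar>A' $ i $ j\<bar> = \<bar>B $ i $ j\<bar>"
    using assms unfolding quasi_Cartan_companion_def quasi_Cartan_def by metis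
  have same_abs: "\<bar>A' $ i $ j\<bar> = \<bar>A $ i $ j\<bar>" for i j
    by (cases "i = j") (simp_all add: diag offdiag)
  show "A' $ i $ j = sign_ratio A A' i j * A $ i $ j"
    using same_abs[of i j] unfolding sign_ratio_def by arith
  show "sign_ratio A A' i j = sign_ratio A A' j i"
    unfolding sign_ratio_def
    using eq_iff_sgn_eq_if_abs_eq[OF same_abs[of i j]] eq_iff_sgn_eq_if_abs_eq[OF same_abs[of j i]]
      symmetrizer_sgn[OF sym(1), of i j] symmetrizer_sgn[OF sym(2), of i j]
    by simp
  show "\<bar>sign_ratio A A' i j\<bar> = 1" by (simp add: sign_ratio_def)
qed

(* Admissibility fixes the sign of every cycle product, so the ratio of two admissible
   companions is trivial on induced cycles. *)
lemma admissible_induced_cycle_balanced: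
  assumes irrefl: "\<And>x. \<not> adjacent B x x"
    and adm: "admissible_companion B A" "admissible_companion B A'"
    and cyc: "induced_cycle_walk (adjacent B) xs"
  shows "walk_prod (sign_ratio A A') xs = 1"
proof -
  define r where "r = length xs - 1"
  define c c' where "c = cycle_edge_prod A r (nth xs)" and "c' = cycle_edge_prod A' r (nth xs)"
  have "cycle_labeling B r (nth xs)"
    unfolding r_def by (rule cycle_labeling_of_induced_cycle_walk[OF irrefl cyc])
  hence "c * c' > 0"
    using adm unfolding admissible_companion_def c_def c'_def
    by (cases "oriented_cycle B (nth xs ` {0..<r})") (auto simp: mult_neg_neg)
  moreover have "c' = walk_prod (sign_ratio A A') xs * c"
    unfolding c_def c'_def
    by (rule cycle_edge_prod_rescaled)
      (use cyc adm companion_sign_ratio(1) r_def in \<open>auto simp: induced_cycle_walk_def admissible_companion_def\<close>)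
  moreover have "\<bar>walk_prod (sign_ratio A A') xs\<bar> = 1"
    by (rule walk_prod_abs) (use adm companion_sign_ratio(3) in \<open>auto simp: admissible_companion_def\<close>)
  ultimately show ?thesis
    by (cases "walk_prod (sign_ratio A A') xs \<ge> 0") (auto simp: abs_if mult_less_0_iff)
qed


(* Main step: two admissible companions differ by a switching s of the vertices.  Off
   the diagram both entries vanish, and on the diagonal both are 2. *)
lemma admissible_companions_switching:
  assumes skew: "skew_symmetrizable B"
    and adm: "admissible_companion B A" "admissible_companion B A'"
  obtains s :: "'n::finite \<Rightarrow> int" where "\<And>v. \<bar>s v\<bar> = 1" and "\<And>i j. A' $ i $ j = s i * s j * A $ i $ j"
proof -
  let ?e = "sign_ratio A A'"
  have comp: "quasi_Cartan_companion B A" "quasi_Cartan_companion B A'"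
    using adm unfolding admissible_companion_def by auto
  have adj_sym: "adjacent B x y = adjacent B y x" for x y by (auto simp: adjacent_def)
  have irrefl: "\<not> adjacent B x x" for x
    using skew_symmetrizable_diagram[OF skew] by simp
  have e_sym: "?e i j = ?e j i" and e_unit: "\<bar>?e i j\<bar> = 1" for i j
    using companion_sign_ratio(2,3)[OF comp] by blast+
  have "walk_prod ?e xs = 1"
    if "successively (adjacent B) xs" "xs \<noteq> []" "hd xs = last xs" for xs
    using closed_walk_prod_one[of "adjacent B" ?e, OF adj_sym irrefl e_sym e_unit
        admissible_induced_cycle_balanced[OF irrefl adm]] that by blast
  then obtain s where s_unit: "\<And>v. \<bar>s v\<bar> = 1"
    and s_edge: "\<And>i j. adjacent B i j \<Longrightarrow> ?e i j = s i * s j"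
    using switching_of_balanced_signing[of "adjacent B" ?e, OF adj_sym e_sym e_unit] by blast
  have "A' $ i $ j = s i * s j * A $ i $ j" for i j
  proof (cases "adjacent B i j")
    case True
    then show ?thesis using s_edge companion_sign_ratio(1)[OF comp] by simp
  next
    case nonadj: False
    show ?thesis
    proof (cases "i = j")
      case True
      then show ?thesis
        using comp unit_square[OF s_unit[of i]]
        by (simp add: quasi_Cartan_companion_def quasi_Cartan_def)
    next
      case False
      hence "\<bar>A $ i $ j\<bar> = 0" and "\<bar>A' $ i $ j\<bar> = 0"
        using comp nonadj skew_symmetrizable_diagram(2)[OF skew, of i j]
        by (simp_all add: quasi_Cartan_companion_def)
      then show ?thesis by simp
    qed
  qed
  with s_unit show thesis by (rule that)
qed

lemma sign_changes_distinct:
  "distinct ks \<Longrightarrow> sign_changes ks M =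
     (\<chi> i j. (if i \<in> set ks then -1 else 1) * (if j \<in> set ks then -1 else 1) * M $ i $ j)"
  unfolding sign_changes_def
  by (induction ks arbitrary: M) (auto simp: vec_eq_iff sign_change_def)

lemma switching_is_sign_changes:
  assumes s_unit: "\<And>v. \<bar>s v\<bar> = 1" and switch: "\<And>i j. A' $ i $ j = s i * s j * A $ i $ j"
  shows "\<exists>ks. A' = sign_changes ks A"
proof -
  obtain ks where ks: "set ks = {v. s v = -1}" "distinct ks"
    using finite_distinct_list[of "{v. s v = -1}"] by auto
  have "(if v \<in> set ks then -1 else 1) = s v" for v
    using ks(1) s_unit[of v] by (auto simp: abs_if split: if_splits)
  hence "A' = sign_changes ks A"
    unfolding sign_changes_distinct[OF ks(2)] by (simp add: vec_eq_iff switch)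
  then show ?thesis ..
qed


lemma switching_preserves_symmetrizer:
  assumes d: "is_symmetrizer d A" and switch: "\<And>i j. A' $ i $ j = s i * s j * A $ i $ j"
  shows "is_symmetrizer d A'"
proof -
  have "d$i * of_int (A'$i$j) = d$j * of_int (A'$j$i)" for i j
  proof -
    have "d$i * of_int (A'$i$j) = of_int (s i * s j) * (d$i * of_int (A$i$j))"
      by (simp add: switch algebra_simps)
    also have "\<dots> = of_int (s i * s j) * (d$j * of_int (A$j$i))"
      using d unfolding is_symmetrizer_def by simp
    also have "\<dots> = d$j * of_int (A'$j$i)" by (simp add: switch algebra_simps)
    finally show ?thesis .
  qed
  then show ?thesis using d unfolding is_symmetrizer_def by simp
qed

lemma diagonal_congruence:
  fixes M :: "real^'n^'n"
  shows "(transpose (\<chi> i j. if i = j then t i else 0) ** M ** (\<chi> i j. if i = j then t i else 0)) $ i $ j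
     = t i * M $ i $ j * t j"
  by (simp add: matrix_matrix_mult_def transpose_def if_distrib[of "\<lambda>x. x * _"]
      if_distrib[of "\<lambda>x. _ * x"] cong: if_cong)

(* A switching is the congruence by diag(s), a unimodular integer matrix. *)
lemma switching_qc_equivalent:
  fixes A A' :: "int^'n^'n"
  assumes d: "is_symmetrizer d A"
    and s_unit: "\<And>v. \<bar>s v\<bar> = 1" and switch: "\<And>i j. A' $ i $ j = s i * s j * A $ i $ j"
  shows "qc_equivalent A A'"
proof -
  define E :: "int^'n^'n" where "E = (\<chi> i j. if i = j then s i else 0)"
  have "det E * det E = (\<Prod>i\<in>UNIV. s i * s i)"
    by (simp add: E_def det_diagonal prod.distrib)
  also have "\<dots> = 1" using unit_square[OF s_unit] by simp
  finally have det_E: "det E = 1 \<or> det E = -1" by (simp add: square_eq_1_iff)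
  have "(\<chi> i j. real_of_int (E$i$j)) = (\<chi> i j. if i = j then real_of_int (s i) else 0)"
    by (simp add: vec_eq_iff E_def)
  hence "sym_form d A' = transpose (\<chi> i j. real_of_int (E$i$j)) ** sym_form d A ** (\<chi> i j. real_of_int (E$i$j))"
    by (simp add: vec_eq_iff diagonal_congruence sym_form_def switch algebra_simps)
  then show ?thesis
    unfolding qc_equivalent_def using d switching_preserves_symmetrizer[OF d switch] det_E by blast
qed

theorem mainTheorem1:
  fixes B A A' :: "int^'n^'n"
  assumes "skew_symmetrizable B"
    and "admissible_companion B A"
    and "admissible_companion B A'"
  shows "(\<exists>ks. A' = sign_changes ks A) \<and> qc_equivalent A A'"
proof -
  obtain s where s_unit: "\<And>v. \<bar>s v\<bar> = 1" and switch: "\<And>i j. A' $ i $ j = s i * s j * A $ i $ j"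
    using admissible_companions_switching[OF assms] by blast
  obtain d where d: "is_symmetrizer d A"
    using assms(2) unfolding admissible_companion_def quasi_Cartan_companion_def quasi_Cartan_def
    by blast
  show ?thesis
    using switching_is_sign_changes[OF s_unit switch] switching_qc_equivalent[OF d s_unit switch]
    by blast
qed

end
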